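(* Let $\mathbf{G}$ be the graph with vertex set consisting of $\mathbb{Z}_+=\{0,1,2,\dots\}$ together with additional vertices such that, for each $n\ge0$, $n$ and $n+1$ are joined by $2^n$ disjoint paths of length $2$ (each through its own new middle vertex), and there are no other edges. Then $\mathbf{G}$ is transient, but two independent simple random walks on $\mathbf{G}$ started from the same vertex meet infinitely many times almost surely. *)

theory Defs
  imports "HOL-Probability.Probability"
begin

text \<open>Vertices: Z n is the integer vertex n of Z_+; Mid n k (for k < 2^n) is the
  middle vertex of the k-th path of length 2 joining n and n+1.  Values Mid n k with
  k \<ge> 2^n are not vertices of G (they are isolated junk elements of the type).\<close>

datatype vtx = Z nat | Mid nat nat

definition G_verts :: "vtx set" where
  "G_verts = range Z \<union> {Mid n k | n k. k < 2 ^ n}"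

definition G_edge :: "vtx \<Rightarrow> vtx \<Rightarrow> bool" where
  "G_edge x y \<longleftrightarrow>
     (\<exists>n k. k < 2 ^ n \<and>
        ((x = Z n \<and> y = Mid n k) \<or> (x = Mid n k \<and> y = Z n) \<or>
         (x = Mid n k \<and> y = Z (Suc n)) \<or> (x = Z (Suc n) \<and> y = Mid n k)))"

definition srw :: "'s measure \<Rightarrow> ('a \<Rightarrow> 'a \<Rightarrow> bool) \<Rightarrow> (nat \<Rightarrow> 's \<Rightarrow> 'a) \<Rightarrow> 'a \<Rightarrow> bool" where
  "srw M E X v \<longleftrightarrow>
     prob_space M \<and>
     (\<forall>n. X n \<in> measurable M (count_space UNIV)) \<and>
     (AE \<omega> in M. X 0 \<omega> = v) \<and>
     (\<forall>n (xs :: nat \<Rightarrow> 'a) y.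
        measure M {\<omega> \<in> space M. (\<forall>i\<le>n. X i \<omega> = xs i) \<and> X (Suc n) \<omega> = y}
        = measure M {\<omega> \<in> space M. \<forall>i\<le>n. X i \<omega> = xs i}
          * (if E (xs n) y then 1 / real (card {z. E (xs n) z}) else 0))"

definition indep_processes :: "'s measure \<Rightarrow> (nat \<Rightarrow> 's \<Rightarrow> 'a) \<Rightarrow> (nat \<Rightarrow> 's \<Rightarrow> 'a) \<Rightarrow> bool" where
  "indep_processes M X Y \<longleftrightarrow>
     prob_space.indep_var M
       (Pi\<^sub>M UNIV (\<lambda>_. count_space UNIV)) (\<lambda>\<omega> n. X n \<omega>)
       (Pi\<^sub>M UNIV (\<lambda>_. count_space UNIV)) (\<lambda>\<omega> n. Y n \<omega>)"

end

theory Submission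
  imports Defs
begin

text \<open>The walk projects to its level, 2n at the vertex n and 2n + 1 inside the paths from n
  to n + 1. The level is a birth-death chain: from a positive even level it steps up with
  probability 2/3, since there are twice as many paths up as down, and from an odd level it
  moves by one in either direction with probability 1/2.

  Transience: the function of the level that is 2^(-n) at level 2n and 3/4 of that at level
  2n + 1 is positive, superharmonic and tends to 0, so the walk avoids its starting point
  forever with probability at least 1/6.

  Meeting: the levels of two walkers started together always have the same parity, and until
  they meet their gap d changes by 0 or 2 in absolute value, as a martingale whose steps do not
  vanish; when d = 0 at odd levels the walkers meet at the next step with probability 1/2.
  Therefore |d| + 2 is a supermartingale before meeting, so |d| reaches c before the walkers
  meet with probability at most (|d| + 2)/c, and the quadratic Lyapunov function
  (2c + 4)|d| - d^2 bounds the expected time they spend apart with |d| < c by O(c^2).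
  Letting first the time and then c tend to infinity, the walkers meet after any given time
  almost surely.\<close>

definition nbrs :: "vtx \<Rightarrow> vtx set" where
  "nbrs x = {y. G_edge x y}"

definition trans_prob :: "vtx \<Rightarrow> vtx \<Rightarrow> real" where
  "trans_prob x y = (if G_edge x y then 1 / real (card (nbrs x)) else 0)"

fun level :: "vtx \<Rightarrow> int" where
  "level (Z n) = 2 * int n"
| "level (Mid n k) = 2 * int n + 1"

fun level_mean :: "vtx \<Rightarrow> (int \<Rightarrow> real) \<Rightarrow> real" where
  "level_mean (Z 0) f = f 1"
| "level_mean (Z (Suc n)) f = 2/3 * f (2 * int n + 3) + 1/3 * f (2 * int n + 1)"
| "level_mean (Mid n k) f = 1/2 * f (2 * int n) + 1/2 * f (2 * int n + 2)"

lemma vtx_level_cases [case_names Z_0 Z_Suc Mid]: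
  obtains "x = Z 0" | n where "x = Z (Suc n)" | n k where "x = Mid n k"
  by (metis level_mean.cases prod.inject)

lemma Z_in_G_verts [simp]: "Z n \<in> G_verts"
  by (auto simp: G_verts_def)

lemma Mid_in_G_verts_iff [simp]: "Mid n k \<in> G_verts \<longleftrightarrow> k < 2 ^ n"
  by (auto simp: G_verts_def)

lemma nbrs_Z_0: "nbrs (Z 0) = {Mid 0 0}"
  by (auto simp: nbrs_def G_edge_def)

lemma nbrs_Z_Suc: "nbrs (Z (Suc n)) = Mid (Suc n) ` {..<2 ^ Suc n} \<union> Mid n ` {..<2 ^ n}"
  unfolding nbrs_def G_edge_def by (auto, metis power_Suc)

lemma nbrs_Mid: "k < 2 ^ n \<Longrightarrow> nbrs (Mid n k) = {Z n, Z (Suc n)}"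
  by (auto simp: nbrs_def G_edge_def)

lemma nbrs_outside: "x \<notin> G_verts \<Longrightarrow> nbrs x = {}"
  by (cases x) (auto simp: nbrs_def G_edge_def)

lemma finite_nbrs: "finite (nbrs x)"
proof (cases "x \<in> G_verts")
  case True
  then show ?thesis
    by (cases x rule: vtx_level_cases) (auto simp: nbrs_Z_0 nbrs_Z_Suc nbrs_Mid)
qed (simp add: nbrs_outside)

lemma
  assumes "y \<in> nbrs x"
  shows nbr_in_G_verts: "y \<in> G_verts"
    and level_nbr: "\<bar>level y - level x\<bar> = 1"
  using assms by (auto simp: nbrs_def G_edge_def)

lemma card_nbrs_Z_Suc: "card (nbrs (Z (Suc n))) = 3 * 2 ^ n"
proof -
  have "card (nbrs (Z (Suc n))) = card (Mid (Suc n) ` {..<2 ^ Suc n}) + card (Mid n ` {..<2 ^ n})"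
    unfolding nbrs_Z_Suc by (rule card_Un_disjoint) auto
  also have "\<dots> = 2 ^ Suc n + 2 ^ n"
    by (simp add: card_image inj_on_def)
  finally show ?thesis by simp
qed

lemma trans_prob_nonneg: "trans_prob x y \<ge> 0"
  by (simp add: trans_prob_def)

lemma sum_trans_prob_level:
  assumes "x \<in> G_verts"
  shows "(\<Sum>y\<in>nbrs x. trans_prob x y * f (level y)) = level_mean x f"
proof (cases x rule: vtx_level_cases)
  case Z_0
  then show ?thesis by (simp add: nbrs_Z_0 trans_prob_def G_edge_def)
next
  case (Z_Suc m)
  have "trans_prob x y = 1 / (3 * 2 ^ m)" if "y \<in> nbrs x" for y
    using Z_Suc that card_nbrs_Z_Suc[of m] by (simp add: trans_prob_def nbrs_def)
  then have "(\<Sum>y\<in>nbrs x. trans_prob x y * f (level y)) = (\<Sum>y\<in>nbrs x. f (level y) / (3 * 2 ^ m))"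
    by (intro sum.cong) auto
  also have "\<dots> = ((\<Sum>y\<in>Mid (Suc m) ` {..<2 ^ Suc m}. f (level y))
                    + (\<Sum>y\<in>Mid m ` {..<2 ^ m}. f (level y))) / (3 * 2 ^ m)"
    unfolding Z_Suc nbrs_Z_Suc sum_divide_distrib[symmetric] by (subst sum.union_disjoint) auto
  also have "\<dots> = (2 ^ Suc m * f (2 * int m + 3) + 2 ^ m * f (2 * int m + 1)) / (3 * 2 ^ m)"
    by (simp add: sum.reindex inj_on_def algebra_simps)
  also have "\<dots> = level_mean x f"
    using Z_Suc by (simp add: field_simps)
  finally show ?thesis .
next
  case (Mid n k)
  with assms have k: "k < 2 ^ n" by simp
  then have "G_edge x (Z n)" "G_edge x (Z (Suc n))" "card (nbrs x) = 2"
    using Mid by (auto simp: G_edge_def nbrs_Mid)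
  then show ?thesis
    using Mid k by (simp add: nbrs_Mid trans_prob_def field_simps)
qed

lemma sum_trans_prob: "x \<in> G_verts \<Longrightarrow> (\<Sum>y\<in>nbrs x. trans_prob x y) = 1"
  using sum_trans_prob_level[of x "\<lambda>_. 1"] by (cases x rule: vtx_level_cases) auto

lemma sum_trans_prob_le_1: "(\<Sum>y\<in>nbrs x. trans_prob x y) \<le> 1"
  by (cases "x \<in> G_verts") (auto simp: sum_trans_prob nbrs_outside)

lemma level_mean_mono: "(\<And>l. f l \<le> g l) \<Longrightarrow> level_mean x f \<le> level_mean x g"
  by (cases x rule: vtx_level_cases) (auto intro!: add_mono mult_left_mono)

lemma level_mean_affine: "level_mean x (\<lambda>l. a * f l + b) = a * level_mean x f + b"
  by (cases x rule: vtx_level_cases) (auto simp: algebra_simps)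

section \<open>Processes with a Markov transition kernel\<close>

definition cylinder :: "'s measure \<Rightarrow> (nat \<Rightarrow> 's \<Rightarrow> 'a) \<Rightarrow> nat \<Rightarrow> (nat \<Rightarrow> 'a) \<Rightarrow> 's set" where
  "cylinder M W n zs = {\<omega> \<in> space M. \<forall>i\<le>n. W i \<omega> = zs i}"

definition stays_in :: "'s measure \<Rightarrow> (nat \<Rightarrow> 's \<Rightarrow> 'a) \<Rightarrow> (nat \<Rightarrow> 'a set) \<Rightarrow> nat \<Rightarrow> nat \<Rightarrow> 's set" where
  "stays_in M W S m N = {\<omega> \<in> space M. \<forall>j<N. W (m + Suc j) \<omega> \<in> S j}"

text \<open>The probability that the chain with kernel p started at s is in S j after step j + 1,
  for all j < N.\<close>

fun stay_prob :: "('a \<Rightarrow> 'a \<Rightarrow> real) \<Rightarrow> ('a \<Rightarrow> 'a set) \<Rightarrow> (nat \<Rightarrow> 'a set) \<Rightarrow> nat \<Rightarrow> 'a \<Rightarrow> real" where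
  "stay_prob p F S 0 s = 1"
| "stay_prob p F S (Suc N) s = (\<Sum>t\<in>F s \<inter> S 0. p s t * stay_prob p F (\<lambda>j. S (Suc j)) N t)"

lemma cylinder_Suc:
  "cylinder M W (Suc m) (zs(Suc m := t)) = cylinder M W m zs \<inter> {\<omega>. W (Suc m) \<omega> = t}"
  unfolding cylinder_def by (auto simp: le_Suc_eq)

lemma stays_in_Suc:
  "stays_in M W S m (Suc N) = {\<omega> \<in> space M. W (Suc m) \<omega> \<in> S 0} \<inter> stays_in M W (\<lambda>j. S (Suc j)) (Suc m) N"
  unfolding stays_in_def All_less_Suc2 by auto

context prob_space
begin

lemma events_Int_pred:
  assumes "W \<in> measurable M (count_space UNIV)" "E \<in> events"
  shows "E \<inter> {\<omega>. Q (W \<omega>)} \<in> events"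
proof -
  have "W -` {x. Q x} \<inter> space M \<in> events"
    using assms(1) by (rule measurable_sets) simp
  moreover have "E \<inter> {\<omega>. Q (W \<omega>)} = E \<inter> (W -` {x. Q x} \<inter> space M)"
    using assms(2) sets.sets_into_space by auto
  ultimately show ?thesis
    using assms(2) by auto
qed

lemma prob_sum_values:
  assumes W: "W \<in> measurable M (count_space UNIV)" and E: "E \<in> events" and T: "finite T"
    and null: "prob (E \<inter> {\<omega>. W \<omega> \<notin> T}) = 0"
  shows "prob E = (\<Sum>t\<in>T. prob (E \<inter> {\<omega>. W \<omega> = t}))"
proof -
  have sets: "E \<inter> {\<omega>. W \<omega> = t} \<in> events" "E \<inter> {\<omega>. W \<omega> \<notin> T} \<in> events" for t
    using events_Int_pred[OF W E] by auto
  have "E = (\<Union>t\<in>T. E \<inter> {\<omega>. W \<omega> = t}) \<union> (E \<inter> {\<omega>. W \<omega> \<notin> T})"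
    by blast
  moreover have "(\<Union>t\<in>T. E \<inter> {\<omega>. W \<omega> = t}) \<in> events"
    using sets T by blast
  ultimately have "prob E = prob (\<Union>t\<in>T. E \<inter> {\<omega>. W \<omega> = t}) + prob (E \<inter> {\<omega>. W \<omega> \<notin> T})"
    using sets(2) finite_measure_Union[of "\<Union>t\<in>T. E \<inter> {\<omega>. W \<omega> = t}" "E \<inter> {\<omega>. W \<omega> \<notin> T}"]
    by auto
  also have "\<dots> = (\<Sum>t\<in>T. prob (E \<inter> {\<omega>. W \<omega> = t}))"
    using null T sets by (subst finite_measure_finite_Union) (auto simp: disjoint_family_on_def)
  finally show ?thesis .
qed

lemma prob_outside_eq_0:
  assumes W: "W \<in> measurable M (count_space UNIV)" and E: "E \<in> events" and T: "finite T"
    and trans: "\<And>t. prob (E \<inter> {\<omega>. W \<omega> = t}) = prob E * p t" and sum_1: "(\<Sum>t\<in>T. p t) = 1"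
  shows "prob (E \<inter> {\<omega>. W \<omega> \<notin> T}) = 0"
proof -
  have sets: "E \<inter> {\<omega>. W \<omega> = t} \<in> events" "E \<inter> {\<omega>. W \<omega> \<in> T} \<in> events" for t
    using events_Int_pred[OF W E] by auto
  have "prob (E \<inter> {\<omega>. W \<omega> \<in> T}) = prob (\<Union>t\<in>T. E \<inter> {\<omega>. W \<omega> = t})"
    by (rule arg_cong[where f = prob]) blast
  also have "\<dots> = prob E * (\<Sum>t\<in>T. p t)"
    using T sets by (subst finite_measure_finite_Union) (auto simp: disjoint_family_on_def trans sum_distrib_left)
  finally have "prob (E \<inter> {\<omega>. W \<omega> \<in> T}) = prob E"
    using sum_1 by simp
  moreover have "E \<inter> {\<omega>. W \<omega> \<notin> T} = E - (E \<inter> {\<omega>. W \<omega> \<in> T})"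
    by blast
  ultimately show ?thesis
    using E sets by (simp add: finite_measure_Diff)
qed

end

locale discrete_process = prob_space M for M :: "'s measure" +
  fixes W :: "nat \<Rightarrow> 's \<Rightarrow> 'a"
  assumes measurable_W: "W n \<in> measurable M (count_space UNIV)"
begin

lemma pred_W_events: "{\<omega> \<in> space M. Q (W n \<omega>)} \<in> events"
proof -
  have "{\<omega> \<in> space M. Q (W n \<omega>)} = space M \<inter> {\<omega>. Q (W n \<omega>)}"
    by blast
  then show ?thesis
    using events_Int_pred[OF measurable_W sets.top] by simp
qed

lemma cylinder_events: "cylinder M W n zs \<in> events"
proof -
  have "cylinder M W n zs = {\<omega> \<in> space M. \<forall>i\<in>{..n}. W i \<omega> = zs i}"
    unfolding cylinder_def by auto
  moreover have "{\<omega> \<in> space M. \<forall>i\<in>{..n}. W i \<omega> = zs i} \<in> events"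
    by (rule sets.sets_Collect_finite_All) (auto intro: pred_W_events)
  ultimately show ?thesis
    by simp
qed

lemma stays_in_events: "stays_in M W S m N \<in> events"
proof -
  have "stays_in M W S m N = {\<omega> \<in> space M. \<forall>j\<in>{..<N}. W (m + Suc j) \<omega> \<in> S j}"
    unfolding stays_in_def by auto
  moreover have "{\<omega> \<in> space M. \<forall>j\<in>{..<N}. W (m + Suc j) \<omega> \<in> S j} \<in> events"
    by (rule sets.sets_Collect_finite_All) (auto intro: pred_W_events)
  ultimately show ?thesis
    by simp
qed

end

locale markov_process = discrete_process M W for M :: "'s measure" and W :: "nat \<Rightarrow> 's \<Rightarrow> 'a" +
  fixes p :: "'a \<Rightarrow> 'a \<Rightarrow> real" and F :: "'a \<Rightarrow> 'a set"
  assumes finite_F: "finite (F s)"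
    and transition: "prob (cylinder M W n zs \<inter> {\<omega>. W (Suc n) \<omega> = t}) = prob (cylinder M W n zs) * p (zs n) t"
    and null_outside: "prob (cylinder M W n zs \<inter> {\<omega>. W (Suc n) \<omega> \<notin> F (zs n)}) = 0"
begin

lemma prob_cylinder_stays_in_Suc:
  "prob (cylinder M W m zs \<inter> stays_in M W S m (Suc N))
   = (\<Sum>t\<in>F (zs m) \<inter> S 0. prob (cylinder M W (Suc m) (zs(Suc m := t)) \<inter> stays_in M W (\<lambda>j. S (Suc j)) (Suc m) N))"
proof -
  let ?C = "cylinder M W m zs" and ?S' = "\<lambda>j. S (Suc j)"
  let ?E = "?C \<inter> stays_in M W S m (Suc N)"
  have "?C \<inter> {\<omega>. W (Suc m) \<omega> \<notin> F (zs m)} \<in> events"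
    by (rule events_Int_pred[OF measurable_W cylinder_events])
  then have "prob (?E \<inter> {\<omega>. W (Suc m) \<omega> \<notin> F (zs m)}) \<le> prob (?C \<inter> {\<omega>. W (Suc m) \<omega> \<notin> F (zs m)})"
    by (rule finite_measure_mono[rotated]) blast
  then have null: "prob (?E \<inter> {\<omega>. W (Suc m) \<omega> \<notin> F (zs m)}) = 0"
    using null_outside[of m zs] measure_nonneg[of M] by (simp add: antisym)
  have step: "?E \<inter> {\<omega>. W (Suc m) \<omega> = t} = cylinder M W (Suc m) (zs(Suc m := t)) \<inter> stays_in M W ?S' (Suc m) N"
    if "t \<in> S 0" for t
    using that sets.sets_into_space[OF cylinder_events[of m zs]] unfolding stays_in_Suc cylinder_Suc by auto
  have no_step: "?E \<inter> {\<omega>. W (Suc m) \<omega> = t} = {}" if "t \<notin> S 0" for t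
    using that unfolding stays_in_Suc by auto
  have "prob ?E = (\<Sum>t\<in>F (zs m). prob (?E \<inter> {\<omega>. W (Suc m) \<omega> = t}))"
    by (rule prob_sum_values[OF measurable_W sets.Int[OF cylinder_events stays_in_events] finite_F null])
  also have "\<dots> = (\<Sum>t\<in>F (zs m) \<inter> S 0. prob (?E \<inter> {\<omega>. W (Suc m) \<omega> = t}))"
    by (rule sum.mono_neutral_right) (auto simp: finite_F no_step)
  also have "\<dots> = (\<Sum>t\<in>F (zs m) \<inter> S 0. prob (cylinder M W (Suc m) (zs(Suc m := t)) \<inter> stays_in M W ?S' (Suc m) N))"
    by (rule sum.cong) (simp_all add: step)
  finally show ?thesis .
qed

lemma prob_cylinder_stays_in:
  "prob (cylinder M W m zs \<inter> stays_in M W S m N) = prob (cylinder M W m zs) * stay_prob p F S N (zs m)"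
proof (induction N arbitrary: m zs S)
  case 0
  have "stays_in M W S m 0 = space M"
    by (simp add: stays_in_def)
  then show ?case
    using sets.sets_into_space[OF cylinder_events] by (simp add: Int_absorb2)
next
  case (Suc N)
  have "prob (cylinder M W (Suc m) (zs(Suc m := t)) \<inter> stays_in M W (\<lambda>j. S (Suc j)) (Suc m) N)
      = prob (cylinder M W m zs) * p (zs m) t * stay_prob p F (\<lambda>j. S (Suc j)) N t" for t
    using Suc.IH[of "Suc m" "zs(Suc m := t)" "\<lambda>j. S (Suc j)"] unfolding cylinder_Suc transition
    by (simp only: fun_upd_same)
  then show ?case
    by (simp add: prob_cylinder_stays_in_Suc sum_distrib_left mult.assoc)
qed

end

locale substochastic_kernel =
  fixes p :: "'a \<Rightarrow> 'a \<Rightarrow> real" and F :: "'a \<Rightarrow> 'a set"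
  assumes nonneg: "p s t \<ge> 0"
    and finite_F: "finite (F s)"
    and sum_le_1: "(\<Sum>t\<in>F s. p s t) \<le> 1"
begin

lemma sum_restrict_le:
  assumes "\<And>t. t \<in> F s \<inter> T \<Longrightarrow> f t \<le> h t" "\<And>t. t \<in> F s \<Longrightarrow> h t \<ge> 0"
  shows "(\<Sum>t\<in>F s \<inter> T. p s t * f t) \<le> (\<Sum>t\<in>F s. p s t * h t)"
proof -
  have "(\<Sum>t\<in>F s \<inter> T. p s t * f t) \<le> (\<Sum>t\<in>F s \<inter> T. p s t * h t)"
    using assms(1) nonneg by (intro sum_mono mult_left_mono) auto
  also have "\<dots> \<le> (\<Sum>t\<in>F s. p s t * h t)"
    using assms(2) nonneg finite_F by (intro sum_mono2) auto
  finally show ?thesis .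
qed

lemma sum_le_bound:
  assumes "\<And>t. t \<in> F s \<inter> T \<Longrightarrow> f t \<le> b" "b \<ge> 0"
  shows "(\<Sum>t\<in>F s \<inter> T. p s t * f t) \<le> b"
proof -
  have "(\<Sum>t\<in>F s \<inter> T. p s t * f t) \<le> (\<Sum>t\<in>F s. p s t * b)"
    using assms by (intro sum_restrict_le)
  also have "\<dots> \<le> 1 * b"
    unfolding sum_distrib_right[symmetric] using sum_le_1 assms(2) by (rule mult_right_mono)
  finally show ?thesis by simp
qed

lemma stay_prob_le_1: "stay_prob p F S N s \<le> 1"
proof (induction N arbitrary: S s)
  case (Suc N)
  then show ?case by (simp add: sum_le_bound)
qed simp

lemma stay_prob_Suc_le: "stay_prob p F S (Suc N) s \<le> stay_prob p F S N s"
proof (induction N arbitrary: S s)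
  case 0
  then show ?case using stay_prob_le_1[of S 1 s] by simp
next
  case (Suc N)
  then show ?case
    by (subst (1 2) stay_prob.simps) (intro sum_mono mult_left_mono nonneg)
qed

lemma stay_prob_antimono: "j \<le> N \<Longrightarrow> stay_prob p F S N s \<le> stay_prob p F S j s"
proof (induction N rule: dec_induct)
  case (step N)
  then show ?case using stay_prob_Suc_le[of S N s] by linarith
qed simp

end

locale walk =
  fixes M :: "'s measure" and X :: "nat \<Rightarrow> 's \<Rightarrow> vtx" and v :: vtx
  assumes srw: "srw M G_edge X v" and start_vertex: "v \<in> G_verts"

sublocale walk \<subseteq> discrete_process M X
  using srw unfolding srw_def discrete_process_def discrete_process_axioms_def by blast

context walk
begin

lemma walk_transition:
  "prob (cylinder M X n xs \<inter> {\<omega>. X (Suc n) \<omega> = y}) = prob (cylinder M X n xs) * trans_prob (xs n) y"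
proof -
  have "cylinder M X n xs \<inter> {\<omega>. X (Suc n) \<omega> = y} =
      {\<omega> \<in> space M. (\<forall>i\<le>n. X i \<omega> = xs i) \<and> X (Suc n) \<omega> = y}"
    unfolding cylinder_def by blast
  then show ?thesis
    using srw unfolding srw_def cylinder_def trans_prob_def nbrs_def by simp
qed

lemma prob_cylinder_0: "prob (cylinder M X 0 xs) = (if xs 0 = v then 1 else 0)"
proof -
  have start: "AE \<omega> in M. X 0 \<omega> = v"
    using srw by (simp add: srw_def)
  have cyl: "\<omega> \<in> cylinder M X 0 xs \<longleftrightarrow> X 0 \<omega> = xs 0" if "\<omega> \<in> space M" for \<omega>
    using that by (simp add: cylinder_def)
  show ?thesis
  proof (cases "xs 0 = v")
    case True
    have "AE \<omega> in M. \<omega> \<in> cylinder M X 0 xs"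
      using start AE_space by eventually_elim (simp add: cyl True)
    then show ?thesis
      using True prob_eq_1[OF cylinder_events] by simp
  next
    case False
    have "AE \<omega> in M. \<omega> \<notin> cylinder M X 0 xs"
      using start AE_space by eventually_elim (use False in \<open>auto simp: cyl\<close>)
    then show ?thesis
      using False prob_eq_0[OF cylinder_events] by simp
  qed
qed

lemma prob_cylinder_outside_G:
  "xs n \<notin> G_verts \<Longrightarrow> prob (cylinder M X n xs) = 0"
proof (induction n arbitrary: xs)
  case 0
  then show ?case
    using start_vertex by (auto simp: prob_cylinder_0)
next
  case (Suc n)
  have "trans_prob (xs n) (xs (Suc n)) = 0"
    using Suc.prems nbr_in_G_verts by (auto simp: trans_prob_def nbrs_def)
  then show ?case
    using walk_transition[of n xs "xs (Suc n)"] cylinder_Suc[of M X n xs "xs (Suc n)"] by simp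
qed

lemma walk_null_outside:
  "prob (cylinder M X n xs \<inter> {\<omega>. X (Suc n) \<omega> \<notin> nbrs (xs n)}) = 0"
proof (cases "xs n \<in> G_verts")
  case True
  show ?thesis
    by (rule prob_outside_eq_0[where p = "trans_prob (xs n)"])
      (simp_all add: measurable_W cylinder_events finite_nbrs walk_transition sum_trans_prob True)
next
  case False
  have "prob (cylinder M X n xs \<inter> {\<omega>. X (Suc n) \<omega> \<notin> nbrs (xs n)}) \<le> prob (cylinder M X n xs)"
    by (rule finite_measure_mono) (auto intro: cylinder_events)
  then show ?thesis
    using prob_cylinder_outside_G[where n = n and xs = xs, OF False] measure_nonneg[of M] by (simp add: antisym)
qed

end

sublocale walk \<subseteq> markov_process M X trans_prob nbrs
  by unfold_locales (rule finite_nbrs walk_transition walk_null_outside)+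

section \<open>Transience\<close>

definition escape_pot :: "int \<Rightarrow> real" where
  "escape_pot l = (if even l then 1 else 3/4) * (1/2) ^ nat (l div 2)"

definition hit_bound :: "vtx \<Rightarrow> int \<Rightarrow> real" where
  "hit_bound v l = min 1 (escape_pot l / escape_pot (level v))"

lemma escape_pot_pos: "escape_pot l > 0"
  by (simp add: escape_pot_def)

lemma hit_bound_nonneg: "hit_bound v l \<ge> 0"
  by (simp add: hit_bound_def escape_pot_pos less_imp_le)

lemma hit_bound_self: "hit_bound v (level v) = 1"
  by (simp add: hit_bound_def escape_pot_pos less_imp_neq[symmetric])

lemma escape_pot_superharmonic: "level_mean x escape_pot \<le> escape_pot (level x)"
  by (cases x rule: vtx_level_cases) (simp_all add: escape_pot_def nat_add_distrib)

lemma hit_bound_superharmonic: "level_mean x (hit_bound v) \<le> hit_bound v (level x)"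
proof -
  define c where "c = escape_pot (level v)"
  have "c > 0"
    by (simp add: c_def escape_pot_pos)
  have "level_mean x (hit_bound v) \<le> level_mean x (\<lambda>l. 0 * escape_pot l + 1)"
    by (rule level_mean_mono) (simp add: hit_bound_def)
  moreover have "level_mean x (hit_bound v) \<le> level_mean x (\<lambda>l. 1/c * escape_pot l + 0)"
    by (rule level_mean_mono) (simp add: hit_bound_def c_def)
  moreover have "1/c * level_mean x escape_pot \<le> 1/c * escape_pot (level x)"
    using \<open>c > 0\<close> escape_pot_superharmonic by (simp add: divide_right_mono)
  ultimately show ?thesis
    unfolding level_mean_affine hit_bound_def c_def by simp
qed

lemma hit_bound_first_step: "level_mean v (hit_bound v) \<le> 5/6"
  by (cases v rule: vtx_level_cases) (simp_all add: hit_bound_def escape_pot_def nat_add_distrib)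

lemma avoid_prob_step:
  assumes "s \<in> G_verts" and R: "\<And>t. t \<in> nbrs s \<Longrightarrow> t \<noteq> v \<Longrightarrow> R t \<ge> 1 - hit_bound v (level t)"
  shows "(\<Sum>t\<in>nbrs s \<inter> - {v}. trans_prob s t * R t) \<ge> 1 - level_mean s (hit_bound v)"
proof -
  have "(\<Sum>t\<in>nbrs s \<inter> - {v}. trans_prob s t * R t) \<ge> (\<Sum>t\<in>nbrs s \<inter> - {v}. trans_prob s t * (1 - hit_bound v (level t)))"
    using R trans_prob_nonneg by (intro sum_mono mult_left_mono) auto
  moreover have "(\<Sum>t\<in>nbrs s \<inter> - {v}. trans_prob s t * (1 - hit_bound v (level t)))
      = (\<Sum>t\<in>nbrs s. trans_prob s t * (1 - hit_bound v (level t)))"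
    by (rule sum.mono_neutral_left) (auto simp: finite_nbrs hit_bound_self)
  moreover have "(\<Sum>t\<in>nbrs s. trans_prob s t * (1 - hit_bound v (level t))) = 1 - level_mean s (hit_bound v)"
    using sum_trans_prob_level[OF assms(1), of "\<lambda>l. (-1) * hit_bound v l + 1"]
    unfolding level_mean_affine by (simp add: algebra_simps)
  ultimately show ?thesis
    by simp
qed

lemma avoid_prob_ge:
  assumes "s \<in> G_verts" "s \<noteq> v"
  shows "stay_prob trans_prob nbrs (\<lambda>_. - {v}) N s \<ge> 1 - hit_bound v (level s)"
  using assms
proof (induction N arbitrary: s)
  case 0
  then show ?case by (simp add: hit_bound_nonneg)
next
  case (Suc N)
  have "stay_prob trans_prob nbrs (\<lambda>_. - {v}) (Suc N) s \<ge> 1 - level_mean s (hit_bound v)"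
    using Suc nbr_in_G_verts by (simp add: avoid_prob_step)
  then show ?case
    using hit_bound_superharmonic[of s v] by simp
qed

lemma avoid_prob_from_start:
  assumes "v \<in> G_verts"
  shows "stay_prob trans_prob nbrs (\<lambda>_. - {v}) N v \<ge> 1/6"
proof (cases N)
  case (Suc N')
  have "stay_prob trans_prob nbrs (\<lambda>_. - {v}) (Suc N') v \<ge> 1 - level_mean v (hit_bound v)"
    using assms avoid_prob_ge nbr_in_G_verts by (simp add: avoid_prob_step)
  then show ?thesis
    using hit_bound_first_step[of v] Suc by simp
qed simp

context walk
begin

lemma prob_avoid_start_ge: "prob (stays_in M X (\<lambda>_. - {v}) 0 N) \<ge> 1/6"
proof -
  have "prob (cylinder M X 0 (\<lambda>_. v) \<inter> stays_in M X (\<lambda>_. - {v}) 0 N) \<le> prob (stays_in M X (\<lambda>_. - {v}) 0 N)"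
    using stays_in_events by (intro finite_measure_mono) auto
  moreover have "prob (cylinder M X 0 (\<lambda>_. v) \<inter> stays_in M X (\<lambda>_. - {v}) 0 N)
      = stay_prob trans_prob nbrs (\<lambda>_. - {v}) N v"
    unfolding prob_cylinder_stays_in prob_cylinder_0 by simp
  ultimately show ?thesis
    using avoid_prob_from_start[OF start_vertex, of N] by simp
qed

theorem return_prob_less_1: "prob {\<omega> \<in> space M. \<exists>n>0. X n \<omega> = v} < 1"
proof -
  define A where "A N = stays_in M X (\<lambda>_. - {v}) 0 N" for N
  have events_A: "range A \<subseteq> events"
    unfolding A_def using stays_in_events by blast
  have "A (Suc N) \<subseteq> A N" for N
    unfolding A_def stays_in_def by (auto simp: All_less_Suc)
  then have "(\<lambda>N. prob (A N)) \<longlonglongrightarrow> prob (\<Inter>N. A N)"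
    by (intro finite_Lim_measure_decseq[OF events_A] decseq_SucI)
  then have "1/6 \<le> prob (\<Inter>N. A N)"
    by (rule LIMSEQ_le_const) (unfold A_def, blast intro: prob_avoid_start_ge)
  moreover have "(\<Inter>N. A N) = {\<omega> \<in> space M. \<forall>j. X (Suc j) \<omega> \<noteq> v}"
  proof (intro equalityI subsetI)
    fix \<omega> assume "\<omega> \<in> (\<Inter>N. A N)"
    then have "\<omega> \<in> A (Suc j)" for j
      by blast
    then show "\<omega> \<in> {\<omega> \<in> space M. \<forall>j. X (Suc j) \<omega> \<noteq> v}"
      by (simp add: A_def stays_in_def All_less_Suc)
  qed (auto simp: A_def stays_in_def)
  then have "{\<omega> \<in> space M. \<exists>n>0. X n \<omega> = v} = space M - (\<Inter>N. A N)"
    by (auto simp: gr0_conv_Suc)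
  moreover have "(\<Inter>N. A N) \<in> events"
    using events_A by auto
  ultimately show ?thesis
    using prob_compl by simp
qed

end

instance vtx :: countable
  by countable_datatype

definition pair_prob :: "vtx \<times> vtx \<Rightarrow> vtx \<times> vtx \<Rightarrow> real" where
  "pair_prob s t = trans_prob (fst s) (fst t) * trans_prob (snd s) (snd t)"

definition pair_nbrs :: "vtx \<times> vtx \<Rightarrow> (vtx \<times> vtx) set" where
  "pair_nbrs s = nbrs (fst s) \<times> nbrs (snd s)"

lemma sum_pair_prob_levels:
  assumes "fst s \<in> G_verts" "snd s \<in> G_verts"
  shows "(\<Sum>t\<in>pair_nbrs s. pair_prob s t * H (level (fst t)) (level (snd t)))
       = level_mean (fst s) (\<lambda>i. level_mean (snd s) (\<lambda>j. H i j))"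
proof -
  have "(\<Sum>t\<in>pair_nbrs s. pair_prob s t * H (level (fst t)) (level (snd t)))
      = (\<Sum>a\<in>nbrs (fst s). trans_prob (fst s) a * (\<Sum>b\<in>nbrs (snd s). trans_prob (snd s) b * H (level a) (level b)))"
    unfolding pair_nbrs_def pair_prob_def sum.cartesian_product sum_distrib_left
    by (rule sum.cong) (auto simp: mult.assoc)
  also have "\<dots> = (\<Sum>a\<in>nbrs (fst s). trans_prob (fst s) a * level_mean (snd s) (\<lambda>j. H (level a) j))"
    using assms(2) by (simp add: sum_trans_prob_level)
  also have "\<dots> = level_mean (fst s) (\<lambda>i. level_mean (snd s) (\<lambda>j. H i j))"
    by (rule sum_trans_prob_level[OF assms(1)])
  finally show ?thesis .
qed

interpretation pair_kernel: substochastic_kernel pair_prob pair_nbrs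
proof
  fix s t
  show "pair_prob s t \<ge> 0"
    by (simp add: pair_prob_def trans_prob_nonneg)
  show "finite (pair_nbrs s)"
    by (simp add: pair_nbrs_def finite_nbrs)
  have "(\<Sum>t\<in>pair_nbrs s. pair_prob s t)
      = (\<Sum>a\<in>nbrs (fst s). trans_prob (fst s) a) * (\<Sum>b\<in>nbrs (snd s). trans_prob (snd s) b)"
    unfolding pair_nbrs_def pair_prob_def sum.cartesian_product sum_product by (rule sum.cong) auto
  also have "\<dots> \<le> 1 * 1"
    by (intro mult_mono sum_trans_prob_le_1 sum_nonneg trans_prob_nonneg) auto
  finally show "(\<Sum>t\<in>pair_nbrs s. pair_prob s t) \<le> 1"
    by simp
qed

locale walk_pair = prob_space M + X: walk M X v + Y: walk M Y v
  for M :: "'s measure" and X Y :: "nat \<Rightarrow> 's \<Rightarrow> vtx" and v +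
  assumes indep: "indep_processes M X Y"
begin

lemma measurable_pair: "(\<lambda>\<omega>. (X n \<omega>, Y n \<omega>)) \<in> measurable M (count_space UNIV)"
proof -
  have "(\<lambda>\<omega>. (X n \<omega>, Y n \<omega>)) \<in> measurable M (count_space UNIV \<Otimes>\<^sub>M count_space UNIV)"
    by (rule measurable_Pair[OF X.measurable_W Y.measurable_W])
  then show ?thesis
    by (simp add: pair_measure_countable)
qed

lemma cylinder_in_path_space:
  "{f :: nat \<Rightarrow> vtx. \<forall>i\<le>n. f i = xs i} \<in> sets (Pi\<^sub>M UNIV (\<lambda>_. count_space UNIV))"
proof -
  let ?S = "Pi\<^sub>M UNIV (\<lambda>_. count_space UNIV) :: (nat \<Rightarrow> vtx) measure"
  have "(\<lambda>f. f i) -` {xs i} \<inter> space ?S \<in> sets ?S" for i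
    by (rule measurable_sets[OF measurable_component_singleton]) auto
  moreover have "(\<lambda>f. f i) -` {xs i} \<inter> space ?S = {f. f i = xs i}" for i
    by (auto simp: space_PiM)
  ultimately have "(\<Inter>i\<in>{..n}. {f. f i = xs i}) \<in> sets ?S"
    by (intro sets.finite_INT) auto
  moreover have "{f :: nat \<Rightarrow> vtx. \<forall>i\<le>n. f i = xs i} = (\<Inter>i\<in>{..n}. {f. f i = xs i})"
    by auto
  ultimately show ?thesis
    by simp
qed

lemma indep_cylinders:
  "prob (cylinder M X n xs \<inter> cylinder M Y m ys) = prob (cylinder M X n xs) * prob (cylinder M Y m ys)"
proof -
  let ?S = "Pi\<^sub>M UNIV (\<lambda>_. count_space UNIV) :: (nat \<Rightarrow> vtx) measure"
  let ?\<sigma> = "\<lambda>Z. sigma_sets (space M) {(\<lambda>\<omega> n. Z n \<omega>) -` A \<inter> space M | A. A \<in> sets ?S}"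
  have "indep_set (?\<sigma> X) (?\<sigma> Y)"
    using indep unfolding indep_processes_def indep_var_eq by blast
  then have product: "prob (a \<inter> b) = prob a * prob b" if "a \<in> ?\<sigma> X" "b \<in> ?\<sigma> Y" for a b
    using that unfolding indep_sets2_eq by blast
  have "cylinder M Z k zs \<in> ?\<sigma> Z" for Z :: "nat \<Rightarrow> 's \<Rightarrow> vtx" and k zs
  proof (rule sigma_sets.Basic, rule CollectI, intro exI conjI)
    show "{f. \<forall>i\<le>k. f i = zs i} \<in> sets ?S"
      by (rule cylinder_in_path_space)
    show "cylinder M Z k zs = (\<lambda>\<omega> n. Z n \<omega>) -` {f. \<forall>i\<le>k. f i = zs i} \<inter> space M"
      unfolding cylinder_def by auto
  qed
  then show ?thesis
    by (intro product)
qed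

lemma cylinder_pair:
  "cylinder M (\<lambda>n \<omega>. (X n \<omega>, Y n \<omega>)) n zs = cylinder M X n (fst \<circ> zs) \<inter> cylinder M Y n (snd \<circ> zs)"
  unfolding cylinder_def by (auto simp: prod_eq_iff)

lemma pair_transition:
  "prob (cylinder M (\<lambda>n \<omega>. (X n \<omega>, Y n \<omega>)) n zs \<inter> {\<omega>. (X (Suc n) \<omega>, Y (Suc n) \<omega>) = t})
   = prob (cylinder M (\<lambda>n \<omega>. (X n \<omega>, Y n \<omega>)) n zs) * pair_prob (zs n) t"
proof -
  let ?xs = "(fst \<circ> zs)(Suc n := fst t)" and ?ys = "(snd \<circ> zs)(Suc n := snd t)"
  have "cylinder M (\<lambda>n \<omega>. (X n \<omega>, Y n \<omega>)) n zs \<inter> {\<omega>. (X (Suc n) \<omega>, Y (Suc n) \<omega>) = t}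
      = cylinder M X (Suc n) ?xs \<inter> cylinder M Y (Suc n) ?ys"
    unfolding cylinder_pair cylinder_Suc by (auto simp: prod_eq_iff)
  then have "prob (cylinder M (\<lambda>n \<omega>. (X n \<omega>, Y n \<omega>)) n zs \<inter> {\<omega>. (X (Suc n) \<omega>, Y (Suc n) \<omega>) = t})
      = prob (cylinder M X (Suc n) ?xs) * prob (cylinder M Y (Suc n) ?ys)"
    by (simp add: indep_cylinders)
  also have "\<dots> = prob (cylinder M X n (fst \<circ> zs)) * trans_prob (fst (zs n)) (fst t)
      * (prob (cylinder M Y n (snd \<circ> zs)) * trans_prob (snd (zs n)) (snd t))"
    unfolding cylinder_Suc X.walk_transition Y.walk_transition by simp
  also have "\<dots> = prob (cylinder M (\<lambda>n \<omega>. (X n \<omega>, Y n \<omega>)) n zs) * pair_prob (zs n) t"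
    by (simp add: cylinder_pair indep_cylinders pair_prob_def)
  finally show ?thesis .
qed

lemma pair_null_outside:
  "prob (cylinder M (\<lambda>n \<omega>. (X n \<omega>, Y n \<omega>)) n zs \<inter> {\<omega>. (X (Suc n) \<omega>, Y (Suc n) \<omega>) \<notin> pair_nbrs (zs n)}) = 0"
proof -
  let ?A = "cylinder M X n (fst \<circ> zs) \<inter> {\<omega>. X (Suc n) \<omega> \<notin> nbrs (fst (zs n))}"
  let ?B = "cylinder M Y n (snd \<circ> zs) \<inter> {\<omega>. Y (Suc n) \<omega> \<notin> nbrs (snd (zs n))}"
  have events: "?A \<in> events" "?B \<in> events"
    by (rule events_Int_pred[OF X.measurable_W X.cylinder_events],
        rule events_Int_pred[OF Y.measurable_W Y.cylinder_events])
  have "cylinder M (\<lambda>n \<omega>. (X n \<omega>, Y n \<omega>)) n zs \<inter> {\<omega>. (X (Suc n) \<omega>, Y (Suc n) \<omega>) \<notin> pair_nbrs (zs n)}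
      \<subseteq> ?A \<union> ?B"
    unfolding cylinder_pair pair_nbrs_def by auto
  then have "prob (cylinder M (\<lambda>n \<omega>. (X n \<omega>, Y n \<omega>)) n zs \<inter> {\<omega>. (X (Suc n) \<omega>, Y (Suc n) \<omega>) \<notin> pair_nbrs (zs n)})
      \<le> prob (?A \<union> ?B)"
    using events by (intro finite_measure_mono) auto
  also have "\<dots> \<le> prob ?A + prob ?B"
    using events by (rule measure_Un_le)
  also have "\<dots> = 0"
    using X.walk_null_outside[of n "fst \<circ> zs"] Y.walk_null_outside[of n "snd \<circ> zs"] by simp
  finally show ?thesis
    using measure_nonneg[of M] by (simp add: antisym)
qed

lemma prob_pair_cylinder_0: "prob (cylinder M (\<lambda>n \<omega>. (X n \<omega>, Y n \<omega>)) 0 (\<lambda>_. (v, v))) = 1"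
  using indep_cylinders[where n = 0 and xs = "\<lambda>_. v" and m = 0 and ys = "\<lambda>_. v"] X.prob_cylinder_0 Y.prob_cylinder_0
  by (simp add: cylinder_pair comp_def)

end

sublocale walk_pair \<subseteq> pair: discrete_process M "\<lambda>n \<omega>. (X n \<omega>, Y n \<omega>)"
  using prob_space_axioms measurable_pair
  unfolding discrete_process_def discrete_process_axioms_def by blast

sublocale walk_pair \<subseteq> pair: markov_process M "\<lambda>n \<omega>. (X n \<omega>, Y n \<omega>)" pair_prob pair_nbrs
  by unfold_locales (rule pair_kernel.finite_F pair_transition pair_null_outside)+

section \<open>The gap between the two walkers\<close>

definition level_gap :: "vtx \<times> vtx \<Rightarrow> int" where
  "level_gap s = level (fst s) - level (snd s)"

definition in_phase :: "vtx \<times> vtx \<Rightarrow> bool" where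
  "in_phase s \<longleftrightarrow> fst s \<in> G_verts \<and> snd s \<in> G_verts \<and> even (level_gap s)"

definition apart :: "(vtx \<times> vtx) set" where
  "apart = {s. fst s \<noteq> snd s}"

definition apart_within :: "real \<Rightarrow> (vtx \<times> vtx) set" where
  "apart_within c = {s \<in> apart. real_of_int \<bar>level_gap s\<bar> < c}"

lemma
  assumes "t \<in> pair_nbrs s"
  shows in_phase_step: "in_phase s \<Longrightarrow> in_phase t"
    and level_gap_step: "\<bar>level_gap t - level_gap s\<bar> \<le> 2"
proof -
  have "fst t \<in> nbrs (fst s)" "snd t \<in> nbrs (snd s)"
    using assms by (auto simp: pair_nbrs_def)
  note nbr = this[THEN nbr_in_G_verts] this[THEN level_nbr]
  show "in_phase s \<Longrightarrow> in_phase t"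
    using nbr unfolding in_phase_def level_gap_def by (auto simp: abs_if split: if_splits) presburger+
  show "\<bar>level_gap t - level_gap s\<bar> \<le> 2"
    using nbr unfolding level_gap_def by linarith
qed

lemma in_phase_cases:
  assumes "in_phase (a, b)"
  obtains n m where "a = Z n" "b = Z m" | n k m k' where "a = Mid n k" "b = Mid m k'"
proof -
  have "even (level a) \<longleftrightarrow> even (level b)"
    using assms by (simp add: in_phase_def level_gap_def)
  then show ?thesis
    using that by (cases a; cases b) auto
qed

lemma eq_if_level_eq_even: "level a = level b \<Longrightarrow> even (level a) \<Longrightarrow> a = b"
  by (cases a; cases b) (auto, presburger+)

text \<open>One drift inequality for each way the walkers can stand: both at integer vertices,
  one of them at 0 (where it can only step up), or both on middle vertices, at different
  levels or on the same level (where they meet with probability 1/2 at the next step).\<close>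

definition gap_drift :: "real \<Rightarrow> real \<Rightarrow> (int \<Rightarrow> real) \<Rightarrow> bool" where
  "gap_drift c \<kappa> g \<longleftrightarrow>
     1/4 * g (-2) + 1/4 * g 2 \<le> g 0 - \<kappa> \<and>
     (\<forall>d. real_of_int \<bar>d\<bar> < c \<longrightarrow>
        (d \<le> -2 \<longrightarrow> 2/3 * g d + 1/3 * g (d + 2) \<le> g d - \<kappa>) \<and>
        (d \<ge> 2 \<longrightarrow> 2/3 * g d + 1/3 * g (d - 2) \<le> g d - \<kappa>) \<and>
        (\<bar>d\<bar> \<ge> 2 \<longrightarrow> 5/9 * g d + 2/9 * g (d + 2) + 2/9 * g (d - 2) \<le> g d - \<kappa>) \<and>
        (\<bar>d\<bar> \<ge> 2 \<longrightarrow> 1/2 * g d + 1/4 * g (d + 2) + 1/4 * g (d - 2) \<le> g d - \<kappa>))"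

lemma double_level_mean_Z_le:
  assumes "n \<noteq> m" "real_of_int \<bar>level (Z n) - level (Z m)\<bar> < c" "gap_drift c \<kappa> g"
  shows "level_mean (Z n) (\<lambda>i. level_mean (Z m) (\<lambda>j. g (i - j))) \<le> g (level (Z n) - level (Z m)) - \<kappa>"
proof -
  define d where "d = level (Z n) - level (Z m)"
  have drift: "d \<le> -2 \<Longrightarrow> 2/3 * g d + 1/3 * g (d + 2) \<le> g d - \<kappa>"
      "d \<ge> 2 \<Longrightarrow> 2/3 * g d + 1/3 * g (d - 2) \<le> g d - \<kappa>"
      "\<bar>d\<bar> \<ge> 2 \<Longrightarrow> 5/9 * g d + 2/9 * g (d + 2) + 2/9 * g (d - 2) \<le> g d - \<kappa>"
    using assms(2,3) unfolding gap_drift_def d_def by blast+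
  have "level_mean (Z n) (\<lambda>i. level_mean (Z m) (\<lambda>j. g (i - j))) \<le> g d - \<kappa>"
  proof (cases n)
    case 0
    then obtain m' where m: "m = Suc m'"
      using assms(1) by (cases m) auto
    have "1 - (2 * int m' + 3) = d" "1 - (2 * int m' + 1) = d + 2" "d \<le> -2"
      using 0 m by (simp_all add: d_def)
    then show ?thesis
      using 0 m drift(1) by simp
  next
    case (Suc n')
    show ?thesis
    proof (cases m)
      case 0
      have "2 * int n' + 3 - 1 = d" "2 * int n' + 1 - 1 = d - 2" "d \<ge> 2"
        using Suc 0 by (simp_all add: d_def)
      then show ?thesis
        using Suc 0 drift(2) by simp
    next
      case (Suc m')
      have "2 * int n' + 3 - (2 * int m' + 3) = d" "2 * int n' + 3 - (2 * int m' + 1) = d + 2"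
          "2 * int n' + 1 - (2 * int m' + 3) = d - 2" "2 * int n' + 1 - (2 * int m' + 1) = d"
          "\<bar>d\<bar> \<ge> 2"
        using \<open>n = Suc n'\<close> Suc assms(1) by (simp_all add: d_def)
      then show ?thesis
        using \<open>n = Suc n'\<close> Suc drift(3) by (simp add: field_simps)
    qed
  qed
  then show ?thesis
    by (simp only: d_def)
qed

lemma double_level_mean_Mid_le:
  assumes "real_of_int \<bar>level (Mid n k) - level (Mid m k')\<bar> < c" "gap_drift c \<kappa> g"
    and H: "\<And>i j. H i j \<le> g (i - j)" "\<And>i. even i \<Longrightarrow> H i i = 0"
  shows "level_mean (Mid n k) (\<lambda>i. level_mean (Mid m k') (\<lambda>j. H i j))
       \<le> g (level (Mid n k) - level (Mid m k')) - \<kappa>"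
proof (cases "n = m")
  case True
  have "level_mean (Mid n k) (\<lambda>i. level_mean (Mid m k') (\<lambda>j. H i j))
      = 1/4 * H (2 * int n) (2 * int n + 2) + 1/4 * H (2 * int n + 2) (2 * int n)"
    using True H(2)[of "2 * int n"] H(2)[of "2 * int n + 2"] by simp
  also have "\<dots> \<le> 1/4 * g (-2) + 1/4 * g 2"
    using H(1)[of "2 * int n" "2 * int n + 2"] H(1)[of "2 * int n + 2" "2 * int n"] by simp
  also have "\<dots> \<le> g 0 - \<kappa>"
    using assms(2) by (simp add: gap_drift_def)
  finally show ?thesis
    using True by simp
next
  case False
  define d where "d = level (Mid n k) - level (Mid m k')"
  have "\<bar>d\<bar> \<ge> 2"
    using False by (simp add: d_def)
  then have drift: "1/2 * g d + 1/4 * g (d + 2) + 1/4 * g (d - 2) \<le> g d - \<kappa>"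
    using assms(1,2) unfolding gap_drift_def d_def by blast
  have "level_mean (Mid n k) (\<lambda>i. level_mean (Mid m k') (\<lambda>j. H i j))
      \<le> level_mean (Mid n k) (\<lambda>i. level_mean (Mid m k') (\<lambda>j. g (i - j)))"
    by (intro level_mean_mono H(1))
  also have "2 * int n - 2 * int m = d" "2 * int n - (2 * int m + 2) = d - 2"
      "2 * int n + 2 - 2 * int m = d + 2" "2 * int n + 2 - (2 * int m + 2) = d"
    by (simp_all add: d_def)
  then have "level_mean (Mid n k) (\<lambda>i. level_mean (Mid m k') (\<lambda>j. g (i - j)))
      = 1/2 * g d + 1/4 * g (d + 2) + 1/4 * g (d - 2)"
    by (simp add: field_simps)
  finally show ?thesis
    using drift by (simp add: d_def)
qed

lemma double_level_mean_le:
  assumes "in_phase (a, b)" "a \<noteq> b" "real_of_int \<bar>level a - level b\<bar> < c" "gap_drift c \<kappa> g"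
    and H: "\<And>i j. H i j \<le> g (i - j)" "\<And>i. even i \<Longrightarrow> H i i = 0"
  shows "level_mean a (\<lambda>i. level_mean b (\<lambda>j. H i j)) \<le> g (level a - level b) - \<kappa>"
  using assms(1)
proof (cases rule: in_phase_cases)
  case (1 n m)
  have "level_mean a (\<lambda>i. level_mean b (\<lambda>j. H i j)) \<le> level_mean a (\<lambda>i. level_mean b (\<lambda>j. g (i - j)))"
    by (intro level_mean_mono H)
  also have "\<dots> \<le> g (level a - level b) - \<kappa>"
    unfolding 1 using 1 assms(2-4) by (intro double_level_mean_Z_le) auto
  finally show ?thesis .
next
  case (2 n k m k')
  show ?thesis
    unfolding 2 by (rule double_level_mean_Mid_le[OF assms(3,4)[unfolded 2] H])
qed

lemma pair_gap_drift:
  assumes s: "in_phase s" "s \<in> apart" "real_of_int \<bar>level_gap s\<bar> < c"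
    and g: "gap_drift c \<kappa> g" "\<And>d. real_of_int \<bar>d\<bar> < c + 2 \<Longrightarrow> g d \<ge> 0"
  shows "(\<Sum>t\<in>pair_nbrs s \<inter> apart. pair_prob s t * g (level_gap t)) \<le> g (level_gap s) - \<kappa>"
proof -
  \<comment> \<open>Equal even levels force the walkers to coincide, so H agrees with g on apart pairs.\<close>
  define H where "H i j = (if i = j \<and> even i then 0 else g (i - j))" for i j
  have "g 0 \<ge> 0"
    using s(3) by (intro g(2)) simp
  then have H: "H i j \<le> g (i - j)" "even i \<Longrightarrow> H i i = 0" for i j
    by (auto simp: H_def)
  have "(\<Sum>t\<in>pair_nbrs s \<inter> apart. pair_prob s t * g (level_gap t))
      \<le> (\<Sum>t\<in>pair_nbrs s. pair_prob s t * H (level (fst t)) (level (snd t)))"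
  proof (rule pair_kernel.sum_restrict_le)
    show "g (level_gap t) \<le> H (level (fst t)) (level (snd t))" if "t \<in> pair_nbrs s \<inter> apart" for t
      using that eq_if_level_eq_even by (auto simp: H_def level_gap_def apart_def)
    show "H (level (fst t)) (level (snd t)) \<ge> 0" if "t \<in> pair_nbrs s" for t
      using level_gap_step[OF that] s(3) by (auto simp: H_def level_gap_def intro!: g(2))
  qed
  also have "\<dots> = level_mean (fst s) (\<lambda>i. level_mean (snd s) (\<lambda>j. H i j))"
    using s(1) unfolding in_phase_def by (intro sum_pair_prob_levels) auto
  also have "\<dots> \<le> g (level_gap s) - \<kappa>"
    using s g(1) H unfolding level_gap_def apart_def
    by (intro double_level_mean_le) auto
  finally show ?thesis .
qed

definition gap_pot :: "int \<Rightarrow> real" where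
  "gap_pot d = \<bar>real_of_int d\<bar> + 2"

definition strip_pot :: "real \<Rightarrow> int \<Rightarrow> real" where
  "strip_pot c d = (2 * c + 4) * \<bar>real_of_int d\<bar> - (real_of_int d)\<^sup>2 + 2 * (2 * c + 4)"

lemma gap_drift_gap_pot: "gap_drift c 0 gap_pot"
proof -
  have up: "gap_pot (d + 2) = gap_pot d - 2" if "d \<le> -2" for d
  proof -
    have "real_of_int d \<le> -2"
      using that by simp
    then show ?thesis
      by (simp add: gap_pot_def abs_if)
  qed
  have down: "gap_pot (d - 2) = gap_pot d - 2" if "d \<ge> 2" for d
  proof -
    have "real_of_int d \<ge> 2"
      using that by simp
    then show ?thesis
      by (simp add: gap_pot_def abs_if)
  qed
  have flat: "gap_pot (d + 2) + gap_pot (d - 2) = 2 * gap_pot d" if "\<bar>d\<bar> \<ge> 2" for d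
  proof -
    have "real_of_int d \<ge> 2 \<or> real_of_int d \<le> -2"
      using that by (cases "d \<ge> 0") auto
    then show ?thesis
      by (auto simp: gap_pot_def abs_if)
  qed
  have "1/4 * gap_pot (-2) + 1/4 * gap_pot 2 \<le> gap_pot 0 - 0"
    by (simp add: gap_pot_def)
  then show ?thesis
    unfolding gap_drift_def by (auto simp: up down dest!: flat; simp add: field_simps)
qed

lemma gap_drift_strip_pot:
  assumes "c \<ge> 0"
  shows "gap_drift c 1 (strip_pot c)"
proof -
  have up: "strip_pot c (d + 2) = strip_pot c d - 2 * (2 * c + 4) - 4 * d - 4" if "d \<le> -2" for d
  proof -
    have "\<bar>real_of_int d + 2\<bar> = - real_of_int d - 2" "\<bar>real_of_int d\<bar> = - real_of_int d"
      using that by auto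
    then show ?thesis
      by (simp add: strip_pot_def power2_eq_square algebra_simps)
  qed
  have down: "strip_pot c (d - 2) = strip_pot c d - 2 * (2 * c + 4) + 4 * d - 4" if "d \<ge> 2" for d
  proof -
    have "\<bar>real_of_int d - 2\<bar> = real_of_int d - 2" "\<bar>real_of_int d\<bar> = real_of_int d"
      using that by auto
    then show ?thesis
      by (simp add: strip_pot_def power2_eq_square algebra_simps)
  qed
  have concave: "strip_pot c (d + 2) + strip_pot c (d - 2) = 2 * strip_pot c d - 8" if "\<bar>d\<bar> \<ge> 2" for d
  proof (cases "d \<ge> 0")
    case True
    then have "\<bar>real_of_int d + 2\<bar> = real_of_int d + 2" "\<bar>real_of_int d - 2\<bar> = real_of_int d - 2"
        "\<bar>real_of_int d\<bar> = real_of_int d"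
      using that by auto
    then show ?thesis
      by (simp add: strip_pot_def power2_eq_square algebra_simps)
  next
    case False
    then have "\<bar>real_of_int d + 2\<bar> = - real_of_int d - 2" "\<bar>real_of_int d - 2\<bar> = 2 - real_of_int d"
        "\<bar>real_of_int d\<bar> = - real_of_int d"
      using that by auto
    then show ?thesis
      by (simp add: strip_pot_def power2_eq_square algebra_simps)
  qed
  have "1/4 * strip_pot c (-2) + 1/4 * strip_pot c 2 \<le> strip_pot c 0 - 1"
    using assms by (simp add: strip_pot_def)
  then show ?thesis
    unfolding gap_drift_def by (auto simp: up down dest!: concave; simp add: field_simps)
qed

lemma strip_pot_nonneg:
  assumes "real_of_int \<bar>d\<bar> \<le> 2 * c + 4"
  shows "strip_pot c d \<ge> 0"
proof -
  have "real_of_int d ^ 2 = \<bar>real_of_int d\<bar> * \<bar>real_of_int d\<bar>"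
    by (simp add: power2_eq_square)
  also have "\<dots> \<le> (2 * c + 4) * \<bar>real_of_int d\<bar>"
    using assms by (intro mult_right_mono) auto
  finally show ?thesis
    using assms by (simp add: strip_pot_def)
qed

lemma strip_pot_le:
  assumes "real_of_int \<bar>d\<bar> \<le> c"
  shows "strip_pot c d \<le> 2 * (c + 2)\<^sup>2"
proof -
  have "(2 * c + 4) * \<bar>real_of_int d\<bar> \<le> (2 * c + 4) * c"
    using assms by (intro mult_left_mono) auto
  moreover have "0 \<le> real_of_int d * real_of_int d"
    by simp
  ultimately have "strip_pot c d \<le> (2 * c + 4) * c + 2 * (2 * c + 4)"
    unfolding strip_pot_def power2_eq_square by linarith
  also have "\<dots> = 2 * (c + 2)\<^sup>2"
    by (simp add: power2_eq_square algebra_simps)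
  finally show ?thesis .
qed

abbreviation survival :: "nat \<Rightarrow> vtx \<times> vtx \<Rightarrow> real" where
  "survival N s \<equiv> stay_prob pair_prob pair_nbrs (\<lambda>_. apart) N s"

abbreviation strip_survival :: "real \<Rightarrow> nat \<Rightarrow> vtx \<times> vtx \<Rightarrow> real" where
  "strip_survival c N s \<equiv> stay_prob pair_prob pair_nbrs (\<lambda>_. apart_within c) N s"

text \<open>Optional stopping for the supermartingale gap_pot: the pair leaves the strip |d| < c
  before meeting with probability at most gap_pot/c.\<close>

lemma survival_le_escape_or_strip:
  assumes c: "c > 0"
  shows "in_phase s \<Longrightarrow> s \<in> apart \<Longrightarrow>
    survival N s \<le> gap_pot (level_gap s) / c + (if s \<in> apart_within c then strip_survival c N s else 0)"
proof (induction N arbitrary: s)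
  case 0
  then show ?case
    using c by (auto simp: apart_within_def gap_pot_def field_simps)
next
  case (Suc N)
  show ?case
  proof (cases "s \<in> apart_within c")
    case False
    then have "1 \<le> gap_pot (level_gap s) / c"
      using Suc.prems c by (simp add: apart_within_def gap_pot_def field_simps)
    then show ?thesis
      using False pair_kernel.stay_prob_le_1[of "\<lambda>_. apart" "Suc N" s] by simp
  next
    case True
    let ?R = "\<lambda>t. if t \<in> apart_within c then strip_survival c N t else 0"
    have "survival (Suc N) s = (\<Sum>t\<in>pair_nbrs s \<inter> apart. pair_prob s t * survival N t)"
      by simp
    also have "\<dots> \<le> (\<Sum>t\<in>pair_nbrs s \<inter> apart. pair_prob s t * (gap_pot (level_gap t) / c + ?R t))"
    proof (intro sum_mono mult_left_mono pair_kernel.nonneg)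
      fix t assume t: "t \<in> pair_nbrs s \<inter> apart"
      then show "survival N t \<le> gap_pot (level_gap t) / c + ?R t"
        using in_phase_step[of t s] Suc.prems(1) by (intro Suc.IH) auto
    qed
    also have "\<dots> = (\<Sum>t\<in>pair_nbrs s \<inter> apart. pair_prob s t * gap_pot (level_gap t)) / c
        + (\<Sum>t\<in>pair_nbrs s \<inter> apart. pair_prob s t * ?R t)"
      by (simp add: sum.distrib sum_divide_distrib algebra_simps)
    also have "(\<Sum>t\<in>pair_nbrs s \<inter> apart. pair_prob s t * ?R t)
        = (\<Sum>t\<in>pair_nbrs s \<inter> apart_within c. pair_prob s t * strip_survival c N t)"
      by (rule sum.mono_neutral_cong_right) (auto simp: pair_kernel.finite_F apart_within_def)
    also have "\<dots> = strip_survival c (Suc N) s"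
      by simp
    also have "(\<Sum>t\<in>pair_nbrs s \<inter> apart. pair_prob s t * gap_pot (level_gap t)) \<le> gap_pot (level_gap s) - 0"
      using Suc.prems True by (intro pair_gap_drift gap_drift_gap_pot) (auto simp: apart_within_def gap_pot_def)
    finally show ?thesis
      using True c by (simp add: divide_right_mono)
  qed
qed

text \<open>Foster's criterion: strip_pot drops by at least 1 in expectation per step spent apart
  in the strip.\<close>

lemma expected_strip_time_le:
  assumes c: "c \<ge> 0"
  shows "in_phase s \<Longrightarrow> s \<in> apart_within c \<Longrightarrow> (\<Sum>j<N. strip_survival c j s) \<le> strip_pot c (level_gap s)"
proof (induction N arbitrary: s)
  case 0
  then show ?case
    using c by (auto simp: apart_within_def intro!: strip_pot_nonneg)
next
  case (Suc N)
  have "(\<Sum>j<Suc N. strip_survival c j s) = 1 + (\<Sum>j<N. strip_survival c (Suc j) s)"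
    by (subst sum.lessThan_Suc_shift) simp
  also have "(\<Sum>j<N. strip_survival c (Suc j) s)
      = (\<Sum>t\<in>pair_nbrs s \<inter> apart_within c. pair_prob s t * (\<Sum>j<N. strip_survival c j t))"
    by (simp add: sum.swap[of _ "{..<N}"] sum_distrib_left)
  also have "\<dots> \<le> (\<Sum>t\<in>pair_nbrs s. pair_prob s t * (if t \<in> apart then strip_pot c (level_gap t) else 0))"
  proof (rule pair_kernel.sum_restrict_le)
    show "(\<Sum>j<N. strip_survival c j t) \<le> (if t \<in> apart then strip_pot c (level_gap t) else 0)"
      if "t \<in> pair_nbrs s \<inter> apart_within c" for t
      using that Suc.IH[of t] in_phase_step[of t s] Suc.prems(1) by (auto simp: apart_within_def)
    show "(if t \<in> apart then strip_pot c (level_gap t) else 0) \<ge> 0" if "t \<in> pair_nbrs s" for t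
      using level_gap_step[OF that] Suc.prems(2) c by (auto simp: apart_within_def intro!: strip_pot_nonneg)
  qed
  also have "\<dots> = (\<Sum>t\<in>pair_nbrs s \<inter> apart. pair_prob s t * strip_pot c (level_gap t))"
    by (simp add: if_distrib sum.inter_restrict[OF pair_kernel.finite_F] cong: if_cong)
  also have "\<dots> \<le> strip_pot c (level_gap s) - 1"
    using Suc.prems c gap_drift_strip_pot[OF c]
    by (intro pair_gap_drift strip_pot_nonneg) (auto simp: apart_within_def)
  finally show ?case
    by simp
qed

lemma strip_survival_le:
  assumes "c \<ge> 0" "in_phase s" "s \<in> apart_within c" "N \<ge> 1"
  shows "strip_survival c N s \<le> 2 * (c + 2)\<^sup>2 / real N"
proof -
  have "real N * strip_survival c N s = (\<Sum>j<N. strip_survival c N s)"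
    by simp
  also have "\<dots> \<le> (\<Sum>j<N. strip_survival c j s)"
    by (intro sum_mono pair_kernel.stay_prob_antimono) simp
  also have "\<dots> \<le> strip_pot c (level_gap s)"
    using assms by (intro expected_strip_time_le)
  also have "\<dots> \<le> 2 * (c + 2)\<^sup>2"
    using assms(3) by (intro strip_pot_le) (simp add: apart_within_def)
  finally show ?thesis
    using assms(4) by (simp add: field_simps)
qed

lemma survival_le:
  assumes "c > 0" "in_phase s" "s \<in> apart" "N \<ge> 1"
  shows "survival N s \<le> (\<bar>level_gap s\<bar> + 2) / c + 2 * (c + 2)\<^sup>2 / real N"
proof -
  have "gap_pot (level_gap s) = \<bar>level_gap s\<bar> + 2"
    by (simp add: gap_pot_def)
  moreover have "(if s \<in> apart_within c then strip_survival c N s else 0) \<le> 2 * (c + 2)\<^sup>2 / real N"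
    using strip_survival_le[of c s N] assms by simp
  ultimately show ?thesis
    using survival_le_escape_or_strip[OF assms(1-3), of N] by simp
qed

lemma survival_after_le:
  assumes "c > 0" "N \<ge> 1"
  shows "in_phase s \<Longrightarrow> stay_prob pair_prob pair_nbrs (\<lambda>j. if j < k then UNIV else apart) (k + Suc N) s
       \<le> (\<bar>level_gap s\<bar> + 2 * k + 4) / c + 2 * (c + 2)\<^sup>2 / real N"
proof (induction k arbitrary: s)
  case 0
  have "stay_prob pair_prob pair_nbrs (\<lambda>j. if j < 0 then UNIV else apart) (0 + Suc N) s
      = (\<Sum>t\<in>pair_nbrs s \<inter> apart. pair_prob s t * survival N t)"
    by simp
  also have "\<dots> \<le> (\<bar>level_gap s\<bar> + 4) / c + 2 * (c + 2)\<^sup>2 / real N"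
  proof (rule pair_kernel.sum_le_bound)
    fix t assume t: "t \<in> pair_nbrs s \<inter> apart"
    have "(\<bar>level_gap t\<bar> + 2) / c \<le> (\<bar>level_gap s\<bar> + 4) / c"
      using level_gap_step[of t s] t assms(1) by (intro divide_right_mono) auto
    then show "survival N t \<le> (\<bar>level_gap s\<bar> + 4) / c + 2 * (c + 2)\<^sup>2 / real N"
      using survival_le[of c t N] t assms in_phase_step[of t s] 0 by simp
  qed (use assms(1) in simp)
  finally show ?case
    by simp
next
  case (Suc k)
  have "stay_prob pair_prob pair_nbrs (\<lambda>j. if j < Suc k then UNIV else apart) (Suc k + Suc N) s
      = (\<Sum>t\<in>pair_nbrs s \<inter> UNIV. pair_prob s t *
           stay_prob pair_prob pair_nbrs (\<lambda>j. if j < k then UNIV else apart) (k + Suc N) t)"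
    by simp
  also have "\<dots> \<le> (\<bar>level_gap s\<bar> + 2 * Suc k + 4) / c + 2 * (c + 2)\<^sup>2 / real N"
  proof (rule pair_kernel.sum_le_bound)
    fix t assume t: "t \<in> pair_nbrs s \<inter> UNIV"
    have "(\<bar>level_gap t\<bar> + 2 * k + 4) / c \<le> (\<bar>level_gap s\<bar> + 2 * Suc k + 4) / c"
      using level_gap_step[of t s] t assms(1) by (intro divide_right_mono) auto
    then show "stay_prob pair_prob pair_nbrs (\<lambda>j. if j < k then UNIV else apart) (k + Suc N) t
        \<le> (\<bar>level_gap s\<bar> + 2 * Suc k + 4) / c + 2 * (c + 2)\<^sup>2 / real N"
      using Suc.IH[of t] t in_phase_step[of t s] Suc.prems by simp
  qed (use assms(1) in simp)
  finally show ?case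
    by simp
qed

lemma le_if_le_plus_over_nat:
  fixes x a b :: real
  assumes "\<And>N. N \<ge> 1 \<Longrightarrow> x \<le> a + b / real N"
  shows "x \<le> a"
proof (rule LIMSEQ_le_const)
  show "(\<lambda>N. a + b / real N) \<longlonglongrightarrow> a"
    using tendsto_add[OF tendsto_const lim_const_over_n, of a b] by simp
  show "\<exists>N0. \<forall>N\<ge>N0. x \<le> a + b / real N"
    using assms by (intro exI[of _ 1]) simp
qed

section \<open>Meeting infinitely often\<close>

context walk_pair
begin

definition never_meet_after :: "nat \<Rightarrow> 's set" where
  "never_meet_after n = {\<omega> \<in> space M. \<forall>m>n. X m \<omega> \<noteq> Y m \<omega>}"

lemma never_meet_after_events: "never_meet_after n \<in> events"
  unfolding never_meet_after_def
proof (rule sets.sets_Collect_countable_All)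
  fix m
  show "{\<omega> \<in> space M. n < m \<longrightarrow> X m \<omega> \<noteq> Y m \<omega>} \<in> events"
    using pair.pred_W_events[of "\<lambda>p. n < m \<longrightarrow> fst p \<noteq> snd p" m] by (simp only: fst_conv snd_conv)
qed

lemma prob_never_meet_after_le:
  assumes "c > 0" "N \<ge> 1"
  shows "prob (never_meet_after n) \<le> (2 * real n + 4) / c + 2 * (c + 2)\<^sup>2 / real N"
proof -
  let ?W = "\<lambda>n \<omega>. (X n \<omega>, Y n \<omega>)"
  let ?S = "\<lambda>j. if j < n then UNIV else apart"
  let ?C = "cylinder M ?W 0 (\<lambda>_. (v, v))"
  have "never_meet_after n \<subseteq> stays_in M ?W ?S 0 (n + Suc N)"
    unfolding never_meet_after_def stays_in_def apart_def by auto
  then have "prob (never_meet_after n) \<le> prob (stays_in M ?W ?S 0 (n + Suc N))"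
    by (rule finite_measure_mono[OF _ pair.stays_in_events])
  also have "\<dots> = prob (?C \<inter> stays_in M ?W ?S 0 (n + Suc N))"
  proof (rule finite_measure_eq_AE)
    have "AE \<omega> in M. \<omega> \<in> ?C"
      using prob_eq_1[OF pair.cylinder_events] prob_pair_cylinder_0 by simp
    then show "AE \<omega> in M. \<omega> \<in> stays_in M ?W ?S 0 (n + Suc N) \<longleftrightarrow> \<omega> \<in> ?C \<inter> stays_in M ?W ?S 0 (n + Suc N)"
      by eventually_elim auto
  qed (simp_all add: sets.Int pair.cylinder_events pair.stays_in_events)
  also have "\<dots> = stay_prob pair_prob pair_nbrs ?S (n + Suc N) (v, v)"
    by (simp only: pair.prob_cylinder_stays_in prob_pair_cylinder_0 mult_1)
  also have "\<dots> \<le> (2 * real n + 4) / c + 2 * (c + 2)\<^sup>2 / real N"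
    using survival_after_le[OF assms, of "(v, v)" n] X.start_vertex
    by (simp add: in_phase_def level_gap_def)
  finally show ?thesis .
qed

lemma prob_never_meet_after: "prob (never_meet_after n) = 0"
proof -
  have "prob (never_meet_after n) \<le> 0 + (2 * real n + 4) / real c" if "c \<ge> 1" for c
  proof (rule le_if_le_plus_over_nat)
    fix N :: nat
    assume "N \<ge> 1"
    then show "prob (never_meet_after n) \<le> 0 + (2 * real n + 4) / real c + 2 * (real c + 2)\<^sup>2 / real N"
      using prob_never_meet_after_le[of "real c" N n] that by simp
  qed
  then have "prob (never_meet_after n) \<le> 0"
    by (rule le_if_le_plus_over_nat)
  then show ?thesis
    using measure_nonneg[of M "never_meet_after n"] by linarith
qed

theorem meet_infinitely_often: "AE \<omega> in M. infinite {n. X n \<omega> = Y n \<omega>}"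
proof -
  have "AE \<omega> in M. \<forall>n. \<omega> \<notin> never_meet_after n"
    using prob_never_meet_after never_meet_after_events by (simp add: AE_all_countable prob_eq_0)
  then show ?thesis
  proof (rule AE_mp, intro AE_I2 impI)
    fix \<omega> assume "\<omega> \<in> space M" "\<forall>n. \<omega> \<notin> never_meet_after n"
    then have "\<forall>n. \<exists>m>n. X m \<omega> = Y m \<omega>"
      by (auto simp: never_meet_after_def)
    then show "infinite {n. X n \<omega> = Y n \<omega>}"
      by (simp add: infinite_nat_iff_unbounded)
  qed
qed

end

theorem mainTheorem11:
  shows "(\<forall>(M :: 's measure) X v. v \<in> G_verts \<longrightarrow> srw M G_edge X v \<longrightarrow>
            measure M {\<omega> \<in> space M. \<exists>n>0. X n \<omega> = v} < 1)
       \<and> (\<forall>(M :: 's measure) X Y v. v \<in> G_verts \<longrightarrow> srw M G_edge X v \<longrightarrow> srw M G_edge Y v \<longrightarrow>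
            indep_processes M X Y \<longrightarrow>
            (AE \<omega> in M. infinite {n. X n \<omega> = Y n \<omega>}))"
proof (intro conjI allI impI)
  fix M :: "'s measure" and X v
  assume "v \<in> G_verts" "srw M G_edge X v"
  then interpret walk M X v
    by unfold_locales
  show "measure M {\<omega> \<in> space M. \<exists>n>0. X n \<omega> = v} < 1"
    by (rule return_prob_less_1)
next
  fix M :: "'s measure" and X Y v
  assume "v \<in> G_verts" "srw M G_edge X v" "srw M G_edge Y v" "indep_processes M X Y"
  then interpret walk_pair M X Y v
    by (intro walk_pair.intro walk_pair_axioms.intro walk.intro) (auto simp: srw_def)
  show "AE \<omega> in M. infinite {n. X n \<omega> = Y n \<omega>}"
    by (rule meet_infinitely_often)
qed

end
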